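(* Let $d\ge 1$, $p>1$ and $s\in(0,1)$ with $sp<d$, and let $\mathcal{C}=C(d,p)\,\frac{s(1-s)}{(d-sp)^{p-1}}$ be the fractional Sobolev constant described in the context. Then for every $u\in W^{s,p}(\mathbb{R}^d)$ with $\int_{\mathbb{R}^d}|u(x)|^p\,dx=1$, \[ \int_{\mathbb{R}^d}|u(x)|^p\log|u(x)|\,dx\le \frac{d}{sp^2}\log\left(\mathcal{C}\int_{\mathbb{R}^d}\int_{\mathbb{R}^d}\frac{|u(x)-u(y)|^p}{|x-y|^{d+sp}}\,dx\,dy\right). \]
   Context: $W^{s,p}(\mathbb{R}^d)$ is the completion of $C_c^\infty(\mathbb{R}^d)$ under the norm $(\|u\|_{L^p}^p+[u]_{W^{s,p}}^p)^{1/p}$, where $[u]_{W^{s,p}(\mathbb{R}^d)}^p=\int_{\mathbb{R}^d}\int_{\mathbb{R}^d}\frac{|u(x)-u(y)|^p}{|x-y|^{d+sp}}dx\,dy$. $C(d,p)>0$ is a constant depending only on $d$ and $p$ such that, with $\mathcal{C}=C(d,p)\frac{s(1-s)}{(d-sp)^{p-1}}$ and $p^*_s=\frac{dp}{d-sp}$, the fractional Sobolev inequality $\|u\|_{L^{p^*_s}(\mathbb{R}^d)}\le \mathcal{C}^{1/p}[u]_{W^{s,p}(\mathbb{R}^d)}$ holds for all $s\in(0,1)$ with $sp<d$ and all $u\in W^{s,p}(\mathbb{R}^d)$ (such a constant exists by a theorem of Maz'ya and Shaposhnikova). *)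

theory Defs
  imports "HOL-Analysis.Analysis"
begin

fun iter_dderiv :: "(real^'n::finite) list \<Rightarrow> (real^'n \<Rightarrow> real) \<Rightarrow> real^'n \<Rightarrow> real" where
  "iter_dderiv [] f = f"
| "iter_dderiv (v # vs) f = (\<lambda>x. frechet_derivative (iter_dderiv vs f) (at x) v)"

definition smooth_fun :: "(real^'n::finite \<Rightarrow> real) \<Rightarrow> bool" where
  "smooth_fun f \<longleftrightarrow> (\<forall>vs. \<forall>x. iter_dderiv vs f differentiable (at x))"

definition Cc_inf :: "(real^'n::finite \<Rightarrow> real) set" where
  "Cc_inf = {f. smooth_fun f \<and> compact (closure {x. f x \<noteq> 0})}"

definition gagliardo_pow :: "real \<Rightarrow> real \<Rightarrow> (real^'n::finite \<Rightarrow> real) \<Rightarrow> ennreal" where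
  "gagliardo_pow s p u =
     (\<integral>\<^sup>+ x. \<integral>\<^sup>+ y. ennreal (\<bar>u x - u y\<bar> powr p / dist x y powr (real CARD('n) + s * p)) \<partial>lborel \<partial>lborel)"

definition Lp_pow :: "real \<Rightarrow> (real^'n::finite \<Rightarrow> real) \<Rightarrow> ennreal" where
  "Lp_pow p u = (\<integral>\<^sup>+ x. ennreal (\<bar>u x\<bar> powr p) \<partial>lborel)"

text \<open>W^{s,p}(R^d): the completion of C_c^infinity under the W^{s,p} norm,
  realised as the set of measurable functions that are W^{s,p}-limits of C_c^infinity functions.\<close>
definition Wsp :: "real \<Rightarrow> real \<Rightarrow> (real^'n::finite \<Rightarrow> real) set" where
  "Wsp s p = {u. u \<in> borel_measurable lborel \<and>
     (\<exists>\<phi>. (\<forall>k. \<phi> k \<in> Cc_inf) \<and>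
        ((\<lambda>k. Lp_pow p (\<lambda>x. \<phi> k x - u x) + gagliardo_pow s p (\<lambda>x. \<phi> k x - u x)) \<longlonglongrightarrow> 0))}"

definition ext_integral :: "'a measure \<Rightarrow> ('a \<Rightarrow> real) \<Rightarrow> ereal" where
  "ext_integral M f = enn2ereal (\<integral>\<^sup>+ x. ennreal (f x) \<partial>M) - enn2ereal (\<integral>\<^sup>+ x. ennreal (- f x) \<partial>M)"

end

theory Submission
  imports Defs
begin

text \<open>Since \<open>\<integral>|u|^p = 1\<close>, the measure \<open>|u|^p dx\<close> is a probability measure. Averaging the
  tangent-line bound \<open>ln y \<le> y - 1\<close> at \<open>y = |u|^a / M\<close> against it gives the Jensen-type
  estimate \<open>\<integral>|u|^p ln|u| \<le> ln M / a\<close> whenever \<open>\<integral>|u|^(p+a) \<le> M\<close>. Taking \<open>p + a = p*\<close>, the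
  fractional Sobolev inequality supplies \<open>M = (\<C> [u]^p)^(p*/p)\<close>, and \<open>(p*/p) / (p* - p) = d / (s p^2)\<close>.\<close>

lemma ext_integral_mono:
  assumes "\<And>x. f x \<le> g x"
  shows "ext_integral M f \<le> ext_integral M g"
  unfolding ext_integral_def
  using assms
  by (intro ereal_minus_mono) (auto simp: less_eq_ennreal.rep_eq[symmetric] intro!: nn_integral_mono ennreal_leI)

lemma ext_integral_eq_integral:
  assumes "integrable M f"
  shows "ext_integral M f = ereal (integral\<^sup>L M f)"
proof -
  have finite: "(\<integral>\<^sup>+ x. ennreal (h x) \<partial>M) < \<infinity>" if "h = f \<or> h = (\<lambda>x. - f x)" for h
  proof -
    have "(\<integral>\<^sup>+ x. ennreal (h x) \<partial>M) \<le> (\<integral>\<^sup>+ x. ennreal (norm (f x)) \<partial>M)"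
      using that by (intro nn_integral_mono) (auto intro: ennreal_leI)
    also have "\<dots> < \<infinity>"
      using assms by (simp add: integrable_iff_bounded)
    finally show ?thesis .
  qed
  obtain r1 where r1: "(\<integral>\<^sup>+ x. ennreal (f x) \<partial>M) = ennreal r1" "r1 \<ge> 0"
    using finite[of f] by (cases "\<integral>\<^sup>+ x. ennreal (f x) \<partial>M" rule: ennreal_cases) auto
  obtain r2 where r2: "(\<integral>\<^sup>+ x. ennreal (- f x) \<partial>M) = ennreal r2" "r2 \<ge> 0"
    using finite[of "\<lambda>x. - f x"] by (cases "\<integral>\<^sup>+ x. ennreal (- f x) \<partial>M" rule: ennreal_cases) auto
  show ?thesis
    using r1 r2 by (simp add: ext_integral_def real_lebesgue_integral_def[OF assms] enn2ereal_ennreal)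
qed

lemma powr_mult_ln_le:
  fixes w a M p :: real
  assumes w: "w \<ge> 0" and a: "a > 0" and M: "M > 0"
  shows "w powr p * ln w \<le> (ln M - 1) / a * w powr p + w powr (p + a) / (a * M)"
proof (cases "w = 0")
  case False
  then have w: "w > 0" using w by simp
  have "a * ln w - ln M = ln (w powr a / M)"
    using w M by (simp add: ln_div)
  also have "\<dots> \<le> w powr a / M - 1"
    using w M by (intro ln_le_minus_one) simp
  finally have "ln w \<le> (ln M - 1) / a + w powr a / (a * M)"
    using a by (simp add: field_simps)
  then have "w powr p * ln w \<le> w powr p * ((ln M - 1) / a + w powr a / (a * M))"
    by (intro mult_left_mono) simp_all
  also have "\<dots> = (ln M - 1) / a * w powr p + w powr (p + a) / (a * M)"
    by (simp add: powr_add field_simps)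
  finally show ?thesis .
qed simp

lemma ext_integral_powr_ln_le:
  fixes f :: "'a \<Rightarrow> real"
  assumes f: "f \<in> borel_measurable \<mu>" and pq: "p < q"
    and norm: "(\<integral>\<^sup>+ x. ennreal (\<bar>f x\<bar> powr p) \<partial>\<mu>) = 1"
    and bound: "(\<integral>\<^sup>+ x. ennreal (\<bar>f x\<bar> powr q) \<partial>\<mu>) \<le> ennreal B"
  shows "ext_integral \<mu> (\<lambda>x. \<bar>f x\<bar> powr p * ln \<bar>f x\<bar>) \<le> ereal (ln B / (q - p))"
proof -
  define a where "a = q - p"
  have a: "a > 0" and q: "q = p + a"
    using pq unfolding a_def by simp_all
  have meas: "(\<lambda>x. \<bar>f x\<bar> powr r) \<in> borel_measurable \<mu>" for r
    using f by measurable
  obtain M where LqM: "(\<integral>\<^sup>+ x. ennreal (\<bar>f x\<bar> powr q) \<partial>\<mu>) = ennreal M" and "M \<ge> 0"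
    using bound by (cases "\<integral>\<^sup>+ x. ennreal (\<bar>f x\<bar> powr q) \<partial>\<mu>" rule: ennreal_cases)
      (auto simp: top_unique)
  have M: "M > 0"
  proof (rule ccontr)
    assume "\<not> M > 0"
    then have "AE x in \<mu>. ennreal (\<bar>f x\<bar> powr q) = 0"
      using LqM \<open>M \<ge> 0\<close> meas[of q] by (simp add: nn_integral_0_iff_AE)
    then have "AE x in \<mu>. ennreal (\<bar>f x\<bar> powr p) = 0"
      by eventually_elim simp
    then have "(\<integral>\<^sup>+ x. ennreal (\<bar>f x\<bar> powr p) \<partial>\<mu>) = 0"
      using nn_integral_0_iff_AE[of "\<lambda>x. ennreal (\<bar>f x\<bar> powr p)" \<mu>] meas[of p] by simp
    then show False
      using norm by simp
  qed
  have M_le_B: "M \<le> B"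
    using bound LqM M by (simp add: ennreal_le_iff2)
  have int_p: "integrable \<mu> (\<lambda>x. \<bar>f x\<bar> powr p)" and int_q: "integrable \<mu> (\<lambda>x. \<bar>f x\<bar> powr q)"
    using norm LqM meas by (auto intro: integrableI_nn_integral_finite)
  have "integral\<^sup>L \<mu> (\<lambda>x. \<bar>f x\<bar> powr p) = 1" and "integral\<^sup>L \<mu> (\<lambda>x. \<bar>f x\<bar> powr q) = M"
    using norm LqM meas \<open>M \<ge> 0\<close> by (simp_all add: integral_eq_nn_integral)
  then have "integral\<^sup>L \<mu> (\<lambda>x. (ln M - 1) / a * \<bar>f x\<bar> powr p + \<bar>f x\<bar> powr q / (a * M)) = ln M / a"
    using int_p int_q M a by (simp add: field_simps)
  then have "ext_integral \<mu> (\<lambda>x. (ln M - 1) / a * \<bar>f x\<bar> powr p + \<bar>f x\<bar> powr q / (a * M)) = ln M / a"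
    using int_p int_q by (simp add: ext_integral_eq_integral)
  moreover have "ext_integral \<mu> (\<lambda>x. \<bar>f x\<bar> powr p * ln \<bar>f x\<bar>)
      \<le> ext_integral \<mu> (\<lambda>x. (ln M - 1) / a * \<bar>f x\<bar> powr p + \<bar>f x\<bar> powr q / (a * M))"
    unfolding q using a M by (intro ext_integral_mono powr_mult_ln_le) simp_all
  moreover have "ln M / a \<le> ln B / a"
    using M M_le_B a by (simp add: divide_right_mono)
  ultimately show ?thesis
    unfolding a_def by (metis dual_order.trans ereal_less_eq(3))
qed

theorem theorem1p1:
  fixes p s Cdp :: real and u :: "real^'n::finite \<Rightarrow> real"
  assumes p: "p > 1"
    and s: "0 < s" "s < 1" "s * p < real CARD('n)"
    and Cdp_pos: "Cdp > 0"
    and sobolev: "\<And>t (v :: real^'n \<Rightarrow> real). 0 < t \<Longrightarrow> t < 1 \<Longrightarrow> t * p < real CARD('n) \<Longrightarrow> v \<in> Wsp t p \<Longrightarrow>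
        Lp_pow (real CARD('n) * p / (real CARD('n) - t * p)) v
          \<le> ennreal (((Cdp * t * (1 - t) / (real CARD('n) - t * p) powr (p - 1)) powr (1 / p)
                      * enn2real (gagliardo_pow t p v) powr (1 / p))
                     powr (real CARD('n) * p / (real CARD('n) - t * p)))"
    and u: "u \<in> Wsp s p"
    and norm1: "Lp_pow p u = 1"
  shows "ext_integral lborel (\<lambda>x. \<bar>u x\<bar> powr p * ln \<bar>u x\<bar>)
         \<le> ereal (real CARD('n) / (s * p^2) *
              ln ((Cdp * s * (1 - s) / (real CARD('n) - s * p) powr (p - 1)) * enn2real (gagliardo_pow s p u)))"
proof -
  define d where "d = real CARD('n)"
  define C where "C = Cdp * s * (1 - s) / (d - s * p) powr (p - 1)"
  define G where "G = enn2real (gagliardo_pow s p u)"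
  define q where "q = d * p / (d - s * p)"
  have dsp: "d - s * p > 0"
    using s unfolding d_def by simp
  have CG: "C * G \<ge> 0"
    unfolding C_def G_def using Cdp_pos s dsp by simp
  have "Lp_pow q u \<le> ennreal ((C powr (1/p) * G powr (1/p)) powr q)"
    using sobolev[OF s u] unfolding C_def G_def q_def d_def by simp
  also have "(C powr (1/p) * G powr (1/p)) powr q = (C * G) powr (q / p)"
    using CG p by (simp add: powr_mult[symmetric] powr_powr)
  finally have "ext_integral lborel (\<lambda>x. \<bar>u x\<bar> powr p * ln \<bar>u x\<bar>) \<le> ereal (ln ((C * G) powr (q / p)) / (q - p))"
    using u norm1 s dsp p unfolding Lp_pow_def Wsp_def q_def
    by (intro ext_integral_powr_ln_le) (auto simp: field_simps)
  also have "ln ((C * G) powr (q / p)) / (q - p) = d / (s * p^2) * ln (C * G)"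
    unfolding q_def using dsp p s by (simp add: field_simps power2_eq_square)
  finally show ?thesis
    unfolding d_def C_def G_def .
qed

end
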